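(* Let $\mathbf{a}=(a_1,\dots,a_n)\in\mathbb{Z}_{\ge0}^n$ with $\mathbf{a}\ne\mathbf{0}$ and $a_1\ge\dots\ge a_n$, let $0<\beta<1$, $\epsilon>0$ and $c_2>0$ with $0<c_2\epsilon<1$, and suppose $1-\beta\ge\dfrac{c_2\epsilon}{n\|\mathbf{a}\|_1}$. If a real number $Z$ satisfies $$\mathrm{Vol}(Q_0\cap Q_1)\le Z\le\Big(1+\frac{c_2\epsilon^2}{2n}\Big)\mathrm{Vol}(Q_0\cap Q_1),$$ then $$(1-\epsilon)\Big(\frac{2^n}{n!}-\mathrm{Vol}(Q_1\cap Q_0)\Big)\le \frac{2^n}{n!}-Z\le \frac{2^n}{n!}-\mathrm{Vol}(Q_1\cap Q_0).$$
   Context: For $\mathbf{c}\in\mathbb{R}^n$, $r\ge 0$, $C(\mathbf{c},r)=\{\mathbf{x}\in\mathbb{R}^n:\|\mathbf{x}-\mathbf{c}\|_1\le r\}$. For $k=0,1,2,\dots$, $Q_k=C((1-\beta^k)\mathbf{a},\beta^k)$. *)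

theory Defs
  imports "HOL-Analysis.Analysis"
begin

text \<open>Points of R^n are represented as extensional functions on the index set {..<n}
  (coordinates 0,...,n-1); Lebesgue measure on R^n is the product measure of lborel.\<close>

definition l1_ball :: "nat \<Rightarrow> (nat \<Rightarrow> real) \<Rightarrow> real \<Rightarrow> (nat \<Rightarrow> real) set" where
  "l1_ball n c r = {x \<in> {..<n} \<rightarrow>\<^sub>E UNIV. (\<Sum>i<n. \<bar>x i - c i\<bar>) \<le> r}"

definition Qk :: "nat \<Rightarrow> (nat \<Rightarrow> nat) \<Rightarrow> real \<Rightarrow> nat \<Rightarrow> (nat \<Rightarrow> real) set" where
  "Qk n a \<beta> k = l1_ball n (\<lambda>i. (1 - \<beta> ^ k) * real (a i)) (\<beta> ^ k)"

definition vol :: "nat \<Rightarrow> (nat \<Rightarrow> real) set \<Rightarrow> real" where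
  "vol n S = measure (Pi\<^sub>M {..<n} (\<lambda>_. lborel)) S"

end

theory Submission
  imports Defs
begin

text \<open>
  \<open>Q\<^sub>0\<close> is the unit \<open>\<ell>\<^sub>1\<close>-ball, of volume \<open>2\<^sup>n / n!\<close>, and \<open>Q\<^sub>1\<close> is the ball of radius
  \<open>\<beta> \<le> 1\<close> around \<open>(1 - \<beta>) a\<close>, whose first coordinate is \<open>c = (1 - \<beta>) a\<^sub>1 \<ge> 0\<close>.
  Fixing the first coordinate \<open>t\<close>, the slice of \<open>Q\<^sub>0 \<inter> Q\<^sub>1\<close> lies in an \<open>(n-1)\<close>-dimensional
  \<open>\<ell>\<^sub>1\<close>-ball of radius \<open>1 - max \<bar>t\<bar> \<bar>t - c\<bar> = 1 - c/2 - \<bar>t - c/2\<bar>\<close>, and integrating over \<open>t\<close>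
  shows that \<open>V = vol (Q\<^sub>0 \<inter> Q\<^sub>1)\<close> is at most the volume \<open>2\<^sup>n (1 - c/2)\<^sup>n / n!\<close> of an
  \<open>\<ell>\<^sub>1\<close>-ball of radius \<open>1 - c/2\<close>. Since \<open>a\<^sub>1\<close> is the largest weight, the hypothesis on \<open>\<beta>\<close>
  gives \<open>c/2 \<ge> \<delta>/n\<close> for \<open>\<delta> = c\<^sub>2 \<epsilon> / (2n)\<close>, and Bernoulli's inequality
  \<open>(1 - \<delta>/n)\<^sup>n (1 + \<delta>) \<le> 1\<close> turns this into \<open>\<delta> V \<le> 2\<^sup>n/n! - V\<close>. The error
  \<open>Z - V \<le> \<epsilon> \<delta> V\<close> is therefore at most an \<open>\<epsilon>\<close>-fraction of \<open>2\<^sup>n/n! - V\<close>.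
\<close>

definition l1_ball_volume :: "nat \<Rightarrow> real \<Rightarrow> real" where
  "l1_ball_volume m r = (if r < 0 then 0 else (2 * r) ^ m / fact m)"

lemma l1_ball_volume_nonneg: "0 \<le> l1_ball_volume m r"
  by (simp add: l1_ball_volume_def)

lemma nn_integral_power_ramp:
  fixes s r :: real
  assumes "0 \<le> r"
  shows "(\<integral>\<^sup>+x. ennreal ((2 * (x - s)) ^ m / fact m) * indicator {s..s + r} x \<partial>lborel)
       = ennreal ((2 * r) ^ Suc m / (2 * fact (Suc m)))"
proof -
  define F where "F = (\<lambda>x. (2 * (x - s)) ^ Suc m / (2 * fact (Suc m)))"
  have "DERIV F x :> (2 * (x - s)) ^ m / fact m" for x
  proof -
    have "((\<lambda>x. (2 * (x - s)) ^ Suc m) has_real_derivative (1 + real m) * (2 * (2 * (x - s)) ^ m)) (at x)"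
      by (rule DERIV_power_Suc) (auto intro!: derivative_eq_intros)
    from DERIV_cdivide[OF this, of "2 * fact (Suc m)"] show ?thesis
      by (simp add: F_def)
  qed
  then have "(\<integral>\<^sup>+x. ennreal ((2 * (x - s)) ^ m / fact m) * indicator {s..s + r} x \<partial>lborel)
      = F (s + r) - F s"
    by (intro nn_integral_FTC_Icc) (use assms in auto)
  then show ?thesis by (simp add: F_def)
qed

lemma nn_integral_power_ramp_down:
  fixes s r :: real
  assumes "0 \<le> r"
  shows "(\<integral>\<^sup>+x. ennreal ((2 * (s + r - x)) ^ m / fact m) * indicator {s..s + r} x \<partial>lborel)
       = ennreal ((2 * r) ^ Suc m / (2 * fact (Suc m)))"
proof -
  have "(\<integral>\<^sup>+x. ennreal ((2 * (s + r - x)) ^ m / fact m) * indicator {s..s + r} x \<partial>lborel)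
      = (\<integral>\<^sup>+x. ennreal ((2 * (x - s)) ^ m / fact m) * indicator {s..s + r} x \<partial>lborel)"
    by (subst nn_integral_real_affine[where c = "-1" and t = "2 * s + r"])
       (auto intro!: nn_integral_cong simp: indicator_def)
  with nn_integral_power_ramp[OF assms] show ?thesis by simp
qed

lemma nn_integral_l1_ball_volume_tent:
  fixes r c :: real
  shows "(\<integral>\<^sup>+x. ennreal (l1_ball_volume m (r - \<bar>x - c\<bar>)) \<partial>lborel) = ennreal (l1_ball_volume (Suc m) r)"
proof (cases "r < 0")
  case True
  have "l1_ball_volume m (r - \<bar>x - c\<bar>) = 0" for x
  proof -
    have "r - \<bar>x - c\<bar> < 0" using True by linarith
    then show ?thesis by (simp add: l1_ball_volume_def)
  qed
  with True show ?thesis by (simp add: l1_ball_volume_def)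
next
  case False
  let ?up = "\<lambda>x. ennreal ((2 * (x - (c - r))) ^ m / fact m)"
  let ?down = "\<lambda>x. ennreal ((2 * (c + r - x)) ^ m / fact m)"
  have "(\<integral>\<^sup>+x. ennreal (l1_ball_volume m (r - \<bar>x - c\<bar>)) \<partial>lborel)
      = (\<integral>\<^sup>+x. ?up x * indicator {c - r..c} x + ?down x * indicator {c<..c + r} x \<partial>lborel)"
    by (intro nn_integral_cong) (auto simp: l1_ball_volume_def indicator_def abs_if algebra_simps)
  also have "\<dots> = (\<integral>\<^sup>+x. ?up x * indicator {c - r..c} x \<partial>lborel) + (\<integral>\<^sup>+x. ?down x * indicator {c<..c + r} x \<partial>lborel)"
    by (intro nn_integral_add) auto
  also have "(\<integral>\<^sup>+x. ?down x * indicator {c<..c + r} x \<partial>lborel) = (\<integral>\<^sup>+x. ?down x * indicator {c..c + r} x \<partial>lborel)"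
    by (intro nn_integral_cong_AE eventually_mono[OF AE_lborel_singleton[of c]]) (auto simp: indicator_def)
  also have "(\<integral>\<^sup>+x. ?up x * indicator {c - r..c} x \<partial>lborel) + \<dots>
      = ennreal ((2 * r) ^ Suc m / (2 * fact (Suc m))) + ennreal ((2 * r) ^ Suc m / (2 * fact (Suc m)))"
    using nn_integral_power_ramp[of r "c - r" m] nn_integral_power_ramp_down[of r c m] False
    by (simp only: not_less diff_add_cancel)
  also have "\<dots> = ennreal (l1_ball_volume (Suc m) r)"
    using False by (simp add: l1_ball_volume_def del: fact_Suc flip: ennreal_plus)
  finally show ?thesis .
qed

definition l1_ball_on :: "'i set \<Rightarrow> ('i \<Rightarrow> real) \<Rightarrow> real \<Rightarrow> ('i \<Rightarrow> real) set" where
  "l1_ball_on I c r = {x \<in> I \<rightarrow>\<^sub>E UNIV. (\<Sum>i\<in>I. \<bar>x i - c i\<bar>) \<le> r}"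

lemma l1_ball_eq_l1_ball_on: "l1_ball n c r = l1_ball_on {..<n} c r"
  by (simp add: l1_ball_def l1_ball_on_def)

lemma sets_l1_ball_on [measurable]: "l1_ball_on I c r \<in> sets (Pi\<^sub>M I (\<lambda>_. lborel))"
proof -
  have "l1_ball_on I c r = {x \<in> space (Pi\<^sub>M I (\<lambda>_. lborel)). (\<Sum>i\<in>I. \<bar>x i - c i\<bar>) \<le> r}"
    by (simp add: l1_ball_on_def space_PiM)
  then show ?thesis by simp
qed

lemma l1_ball_on_mono: "r \<le> r' \<Longrightarrow> l1_ball_on I c r \<subseteq> l1_ball_on I c r'"
  by (auto simp: l1_ball_on_def)

lemma fun_upd_in_l1_ball_on_insert_iff:
  assumes "finite I" "i \<notin> I" "y \<in> I \<rightarrow>\<^sub>E UNIV"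
  shows "y(i := t) \<in> l1_ball_on (insert i I) c r \<longleftrightarrow> y \<in> l1_ball_on I c (r - \<bar>t - c i\<bar>)"
proof -
  have "(\<Sum>j\<in>I. \<bar>(y(i := t)) j - c j\<bar>) = (\<Sum>j\<in>I. \<bar>y j - c j\<bar>)"
    using assms(2) by (intro sum.cong) auto
  with assms show ?thesis
    by (auto simp: l1_ball_on_def PiE_def extensional_def)
qed

lemma emeasure_l1_ball_on:
  assumes "finite I"
  shows "emeasure (Pi\<^sub>M I (\<lambda>_. lborel)) (l1_ball_on I c r) = ennreal (l1_ball_volume (card I) r)"
  using assms
proof (induction I arbitrary: r rule: finite_induct)
  case empty
  show ?case by (cases "r < 0") (auto simp: l1_ball_on_def l1_ball_volume_def PiM_empty)
next
  case (insert i I r)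
  interpret product_sigma_finite "\<lambda>_. lborel :: real measure" by standard
  have "emeasure (Pi\<^sub>M (insert i I) (\<lambda>_. lborel)) (l1_ball_on (insert i I) c r)
     = (\<integral>\<^sup>+t. \<integral>\<^sup>+y. indicator (l1_ball_on (insert i I) c r) (y(i := t)) \<partial>Pi\<^sub>M I (\<lambda>_. lborel) \<partial>lborel)"
    using insert.hyps by (simp add: product_nn_integral_insert_rev flip: nn_integral_indicator)
  also have "\<dots> = (\<integral>\<^sup>+t. \<integral>\<^sup>+y. indicator (l1_ball_on I c (r - \<bar>t - c i\<bar>)) y \<partial>Pi\<^sub>M I (\<lambda>_. lborel) \<partial>lborel)"
    using insert.hyps
    by (intro nn_integral_cong) (auto simp: indicator_def space_PiM fun_upd_in_l1_ball_on_insert_iff)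
  also have "\<dots> = (\<integral>\<^sup>+t. ennreal (l1_ball_volume (card I) (r - \<bar>t - c i\<bar>)) \<partial>lborel)"
    by (simp add: insert.IH)
  also have "\<dots> = ennreal (l1_ball_volume (card (insert i I)) r)"
    using insert.hyps by (simp add: nn_integral_l1_ball_volume_tent)
  finally show ?case .
qed

lemma emeasure_le_nn_integral_l1_ball_slices:
  assumes "finite J" "i \<notin> J" and S: "S \<in> sets (Pi\<^sub>M (insert i J) (\<lambda>_. lborel))"
    and slice: "\<And>t y. y \<in> J \<rightarrow>\<^sub>E UNIV \<Longrightarrow> y(i := t) \<in> S \<Longrightarrow> y \<in> l1_ball_on J (d t) (\<rho> t)"
  shows "emeasure (Pi\<^sub>M (insert i J) (\<lambda>_. lborel)) S
      \<le> (\<integral>\<^sup>+t. ennreal (l1_ball_volume (card J) (\<rho> t)) \<partial>lborel)"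
proof -
  interpret product_sigma_finite "\<lambda>_. lborel :: real measure" by standard
  have "emeasure (Pi\<^sub>M (insert i J) (\<lambda>_. lborel)) S
      = (\<integral>\<^sup>+t. (\<integral>\<^sup>+y. indicator S (y(i := t)) \<partial>Pi\<^sub>M J (\<lambda>_. lborel)) \<partial>lborel)"
    using assms by (simp add: product_nn_integral_insert_rev flip: nn_integral_indicator)
  also have "\<dots> \<le> (\<integral>\<^sup>+t. (\<integral>\<^sup>+y. indicator (l1_ball_on J (d t) (\<rho> t)) y \<partial>Pi\<^sub>M J (\<lambda>_. lborel)) \<partial>lborel)"
    using slice by (intro nn_integral_mono) (auto simp: indicator_def space_PiM)
  also have "\<dots> = (\<integral>\<^sup>+t. ennreal (l1_ball_volume (card J) (\<rho> t)) \<partial>lborel)"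
    using assms by (simp add: emeasure_l1_ball_on)
  finally show ?thesis .
qed

lemma emeasure_inter_l1_balls_le:
  fixes c :: "'i \<Rightarrow> real"
  assumes "finite I" "i \<in> I" "0 \<le> c i" "\<beta> \<le> 1"
  shows "emeasure (Pi\<^sub>M I (\<lambda>_. lborel)) (l1_ball_on I (\<lambda>_. 0) 1 \<inter> l1_ball_on I c \<beta>)
      \<le> ennreal (l1_ball_volume (card I) (1 - c i / 2))"
proof -
  define J where "J = I - {i}"
  have J: "I = insert i J" "i \<notin> J" "finite J"
    using assms(1,2) by (auto simp: J_def)
  then have card_I: "card I = Suc (card J)" by (metis card_insert_disjoint)
  \<comment> \<open>The slice at \<open>t\<close> lies in the ball around \<open>0\<close> of radius \<open>1 - \<bar>t\<bar>\<close> and in the ball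
    around \<open>c\<close> of radius \<open>1 - \<bar>t - c i\<bar>\<close>; \<open>d t\<close> picks the centre of the smaller one.\<close>
  define d where "d t = (if \<bar>t - c i\<bar> \<le> \<bar>t\<bar> then (\<lambda>_. 0) else c)" for t
  define \<rho> where "\<rho> t = 1 - c i / 2 - \<bar>t - c i / 2\<bar>" for t
  have "emeasure (Pi\<^sub>M I (\<lambda>_. lborel)) (l1_ball_on I (\<lambda>_. 0) 1 \<inter> l1_ball_on I c \<beta>)
      \<le> (\<integral>\<^sup>+t. ennreal (l1_ball_volume (card J) (\<rho> t)) \<partial>lborel)"
    unfolding J(1)
  proof (rule emeasure_le_nn_integral_l1_ball_slices)
    fix t y assume y: "y \<in> J \<rightarrow>\<^sub>E UNIV"
      and "y(i := t) \<in> l1_ball_on (insert i J) (\<lambda>_. 0) 1 \<inter> l1_ball_on (insert i J) c \<beta>"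
    then have "y \<in> l1_ball_on J (\<lambda>_. 0) (1 - \<bar>t\<bar>)" "y \<in> l1_ball_on J c (\<beta> - \<bar>t - c i\<bar>)"
      using fun_upd_in_l1_ball_on_insert_iff[OF J(3,2) y] by auto
    moreover have "l1_ball_on J c (\<beta> - \<bar>t - c i\<bar>) \<subseteq> l1_ball_on J c (1 - \<bar>t - c i\<bar>)"
      using assms(4) by (intro l1_ball_on_mono) simp
    moreover have "\<rho> t = min (1 - \<bar>t\<bar>) (1 - \<bar>t - c i\<bar>)"
      using assms(3) unfolding \<rho>_def min_def by (simp add: abs_if)
    ultimately show "y \<in> l1_ball_on J (d t) (\<rho> t)"
      unfolding d_def min_def by (auto split: if_splits)
  qed (use J in simp_all)
  also have "\<dots> = ennreal (l1_ball_volume (card I) (1 - c i / 2))"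
    unfolding \<rho>_def card_I by (rule nn_integral_l1_ball_volume_tent)
  finally show ?thesis .
qed

lemma one_minus_div_power_mul_le_1:
  fixes d :: real
  assumes "0 \<le> d" "d \<le> real n" "0 < n"
  shows "(1 - d / n) ^ n * (1 + d) \<le> 1"
proof -
  have q: "0 \<le> d / n" "d / n \<le> 1" using assms by (auto simp: field_simps)
  have "1 + d = 1 + real n * (d / n)" using assms by simp
  also have "\<dots> \<le> (1 + d / n) ^ n"
    using q by (intro Bernoulli_inequality) simp
  finally have "(1 - d / n) ^ n * (1 + d) \<le> (1 - d / n) ^ n * (1 + d / n) ^ n"
    using q by (intro mult_left_mono) auto
  also have "\<dots> = (1 - (d / n)\<^sup>2) ^ n"
    by (simp add: power_mult_distrib [symmetric] power2_eq_square algebra_simps)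
  also have "\<dots> \<le> 1" using q by (intro power_le_one) (auto simp: power_le_one)
  finally show ?thesis .
qed

lemma l1_ball_volume_shrunk_mul_le:
  assumes "0 \<le> \<delta>" "\<delta> \<le> real n" "0 < n" "\<delta> / n \<le> s"
  shows "l1_ball_volume n (1 - s) * (1 + \<delta>) \<le> 2 ^ n / fact n"
proof (cases "1 - s < 0")
  case True
  then show ?thesis by (simp add: l1_ball_volume_def)
next
  case False
  have "(1 - s) ^ n * (1 + \<delta>) \<le> (1 - \<delta> / n) ^ n * (1 + \<delta>)"
    using False assms by (intro mult_right_mono power_mono) auto
  also have "\<dots> \<le> 1" using assms(1-3) by (rule one_minus_div_power_mul_le_1)
  finally have "2 ^ n / fact n * ((1 - s) ^ n * (1 + \<delta>)) \<le> 2 ^ n / fact n"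
    by (intro mult_left_le) auto
  moreover have "l1_ball_volume n (1 - s) = 2 ^ n / fact n * (1 - s) ^ n"
    unfolding l1_ball_volume_def power_mult_distrib using False by simp
  ultimately show ?thesis by (simp add: mult.assoc)
qed

lemma div_square_le_mul_max_of_sum_bound:
  fixes w :: "nat \<Rightarrow> real"
  assumes "\<exists>i<n. w i \<noteq> 0" "\<And>i. i < n \<Longrightarrow> 0 \<le> w i \<and> w i \<le> w 0" "0 \<le> x"
    and "x / (real n * (\<Sum>i<n. w i)) \<le> b"
  shows "x / (real n)\<^sup>2 \<le> b * w 0"
proof -
  define S where "S = (\<Sum>i<n. w i)"
  obtain i where i: "i < n" "w i \<noteq> 0" using assms(1) by blast
  have "0 < w i" using assms(2)[OF i(1)] i(2) by linarith
  also have "w i \<le> S"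
    unfolding S_def using assms(2) i(1) by (intro member_le_sum) simp_all
  finally have S_pos: "0 < S" .
  have "S \<le> real n * w 0"
    using sum_bounded_above[of "{..<n}" w "w 0"] assms(2) by (simp add: S_def)
  then have S_le: "S / real n \<le> w 0"
    using i(1) by (simp add: pos_divide_le_eq mult.commute)
  have "0 \<le> x / (real n * S)" using assms(3) S_pos by simp
  then have "x / (real n * S) * (S / real n) \<le> b * w 0"
    using assms(4) S_pos S_le by (intro mult_mono) (simp_all add: S_def)
  moreover have "x / (real n)\<^sup>2 = x / (real n * S) * (S / real n)"
    using S_pos i by (simp add: power2_eq_square)
  ultimately show ?thesis by simp
qed

lemma one_minus_mul_diff_le_diff:
  fixes U V Z \<delta> \<epsilon> :: real
  assumes "V * (1 + \<delta>) \<le> U" "0 \<le> \<epsilon>" "Z \<le> (1 + \<epsilon> * \<delta>) * V"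
  shows "(1 - \<epsilon>) * (U - V) \<le> U - Z"
proof -
  have "\<epsilon> * (\<delta> * V) \<le> \<epsilon> * (U - V)"
    using assms by (intro mult_left_mono) (auto simp: algebra_simps)
  with assms(3) show ?thesis by (simp add: algebra_simps)
qed

theorem mainTheorem12:
  fixes n :: nat and a :: "nat \<Rightarrow> nat" and \<beta> \<epsilon> c\<^sub>2 Z :: real
  assumes a_nonzero: "\<exists>i<n. a i \<noteq> 0"
    and a_sorted: "\<forall>i j. i \<le> j \<longrightarrow> j < n \<longrightarrow> a j \<le> a i"
    and \<beta>: "0 < \<beta>" "\<beta> < 1"
    and \<epsilon>: "\<epsilon> > 0" and c2: "c\<^sub>2 > 0"
    and c2\<epsilon>: "0 < c\<^sub>2 * \<epsilon>" "c\<^sub>2 * \<epsilon> < 1"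
    and \<beta>_bound: "1 - \<beta> \<ge> c\<^sub>2 * \<epsilon> / (real n * (\<Sum>i<n. real (a i)))"
    and Z_lower: "vol n (Qk n a \<beta> 0 \<inter> Qk n a \<beta> 1) \<le> Z"
    and Z_upper: "Z \<le> (1 + c\<^sub>2 * \<epsilon>^2 / (2 * real n)) * vol n (Qk n a \<beta> 0 \<inter> Qk n a \<beta> 1)"
  shows "(1 - \<epsilon>) * (2 ^ n / fact n - vol n (Qk n a \<beta> 1 \<inter> Qk n a \<beta> 0)) \<le> 2 ^ n / fact n - Z
       \<and> 2 ^ n / fact n - Z \<le> 2 ^ n / fact n - vol n (Qk n a \<beta> 1 \<inter> Qk n a \<beta> 0)"
proof -
  define V where "V = vol n (Qk n a \<beta> 0 \<inter> Qk n a \<beta> 1)"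
  define \<delta> where "\<delta> = c\<^sub>2 * \<epsilon> / (2 * real n)"
  define c where "c i = (1 - \<beta>) * real (a i)" for i
  obtain i where i: "i < n" "a i \<noteq> 0" using a_nonzero by blast
  have "c\<^sub>2 * \<epsilon> / (real n)\<^sup>2 \<le> (1 - \<beta>) * real (a 0)"
    using a_nonzero a_sorted c2\<epsilon> \<beta>_bound
    by (intro div_square_le_mul_max_of_sum_bound) auto
  then have shift: "\<delta> / n \<le> c 0 / 2"
    by (simp add: \<delta>_def c_def power2_eq_square field_simps)
  have \<delta>: "0 \<le> \<delta>" "\<delta> \<le> 1"
    using c2\<epsilon> i by (auto simp: \<delta>_def field_simps)
  have "V \<le> l1_ball_volume n (1 - c 0 / 2)"
    using emeasure_inter_l1_balls_le[of "{..<n}" 0 c \<beta>] i \<beta>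
    unfolding V_def vol_def measure_def Qk_def l1_ball_eq_l1_ball_on c_def
    by (intro enn2real_leI l1_ball_volume_nonneg) simp
  then have "V * (1 + \<delta>) \<le> l1_ball_volume n (1 - c 0 / 2) * (1 + \<delta>)"
    using \<delta> by (intro mult_right_mono) auto
  also have "\<dots> \<le> 2 ^ n / fact n"
    using \<delta> shift i by (intro l1_ball_volume_shrunk_mul_le) (auto intro: order_trans[of _ 1])
  finally have "V * (1 + \<delta>) \<le> 2 ^ n / fact n" .
  moreover have "Z \<le> (1 + \<epsilon> * \<delta>) * V"
    using Z_upper by (simp add: V_def \<delta>_def power2_eq_square mult.left_commute)
  ultimately show ?thesis
    using one_minus_mul_diff_le_diff[of V \<delta> "2 ^ n / fact n" \<epsilon> Z] \<epsilon> Z_lower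
    by (simp add: V_def Int_commute)
qed

end
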